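(* Let $(\mathscr{M},g)$ be a smooth complete Riemannian manifold, $x_0\in\mathscr M$, $r>0$, and $u\in C(\overline B_r(x_0))$. Suppose $u(y_0)=l$ for some $y_0\in\overline B_{r/2}(x_0)$, that $u\ge t$ on $\overline B_r(x_0)\setminus B_{5r/6}(x_0)$, and that $l<t$. Then for every $a\ge0$, \[ A\big(a,\overline B_{r/6}(y_0)/B_r(x_0),u\big)\subset B_{5r/6}(x_0)\cap\Big\{u\le l+\frac{ar^2}{36}\Big\}. \]
   Context: $\rho$ is the Riemannian distance and $B_s(z)$ the geodesic ball. For a domain $\Omega$, $u\in C(\overline\Omega)$, $a\ge0$ and compact $E$, $A(a,E/\Omega,u)$ is the set of $x\in\overline\Omega$ such that for some $y\in E$, $\inf_{\overline\Omega}\{u+\frac a2\rho^2(\cdot,y)\}=u(x)+\frac a2\rho^2(x,y)$. *)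

theory Defs
  imports "HOL-Analysis.Analysis"
begin

definition contact_set :: "real \<Rightarrow> 'a::metric_space set \<Rightarrow> 'a set \<Rightarrow> ('a \<Rightarrow> real) \<Rightarrow> 'a set" where
  "contact_set a E \<Omega> u =
     {x \<in> closure \<Omega>. \<exists>y\<in>E. \<forall>z\<in>closure \<Omega>.
        u x + a / 2 * (dist x y)\<^sup>2 \<le> u z + a / 2 * (dist z y)\<^sup>2}"

end

theory Submission
  imports Defs
begin

text \<open>Compare a contact point x with the competitor y0, where u = l. The paraboloid term at
  y0 is at most (a/2)(r/6)^2, which bounds u x. If x lay in the annulus where u \<ge> t > l,
  every vertex would be at least as close to y0 as to x, so the paraboloid term could only
  favour y0 and force u x \<le> l, a contradiction.\<close>

lemma contact_setE:
  assumes "x \<in> contact_set a E \<Omega> u" and "z \<in> closure \<Omega>"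
  obtains y where "y \<in> E" and "u x + a / 2 * (dist x y)\<^sup>2 \<le> u z + a / 2 * (dist z y)\<^sup>2"
  using assms unfolding contact_set_def by blast

lemma contact_set_le_if_closer_vertices:
  assumes "x \<in> contact_set a E \<Omega> u" "a \<ge> 0" "z \<in> closure \<Omega>"
    and "\<forall>y\<in>E. dist z y \<le> dist x y"
  shows "u x \<le> u z"
proof -
  obtain y where "y \<in> E" and min: "u x + a / 2 * (dist x y)\<^sup>2 \<le> u z + a / 2 * (dist z y)\<^sup>2"
    using contact_setE assms(1,3) .
  then have "(dist z y)\<^sup>2 \<le> (dist x y)\<^sup>2"
    using assms(4) by (simp add: power_mono)
  then have "a / 2 * (dist z y)\<^sup>2 \<le> a / 2 * (dist x y)\<^sup>2"
    using assms(2) by (simp add: mult_left_mono)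
  with min show ?thesis by linarith
qed

lemma contact_set_le_radius:
  assumes "x \<in> contact_set a E \<Omega> u" "a \<ge> 0" "z \<in> closure \<Omega>" "E \<subseteq> cball z \<rho>"
  shows "u x \<le> u z + a / 2 * \<rho>\<^sup>2"
proof -
  obtain y where "y \<in> E" and min: "u x + a / 2 * (dist x y)\<^sup>2 \<le> u z + a / 2 * (dist z y)\<^sup>2"
    using contact_setE assms(1,3) .
  then have "dist z y \<le> \<rho>"
    using assms(4) by auto
  then have "(dist z y)\<^sup>2 \<le> \<rho>\<^sup>2"
    by (simp add: power_mono)
  then have "a / 2 * (dist z y)\<^sup>2 \<le> a / 2 * \<rho>\<^sup>2"
    using assms(2) by (simp add: mult_left_mono)
  moreover have "a / 2 * (dist x y)\<^sup>2 \<ge> 0"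
    using assms(2) by simp
  ultimately show ?thesis using min by linarith
qed

lemma dist_cball_le_outside_ball:
  fixes x0 :: "'a::metric_space"
  assumes "y0 \<in> cball x0 (r / 2)" "y \<in> cball y0 (r / 6)" "x \<notin> ball x0 (5 * r / 6)"
  shows "dist y0 y \<le> dist x y"
  using assms dist_triangle[of x0 y y0] dist_triangle[of x0 x y]
  by (simp add: dist_commute)

theorem lemma3p3:
  fixes x0 y0 :: "'a::metric_space" and u :: "'a \<Rightarrow> real" and r l t :: real
  assumes "r > 0"
    and "continuous_on (closure (ball x0 r)) u"
    and "y0 \<in> cball x0 (r / 2)"
    and "u y0 = l"
    and "\<forall>x \<in> closure (ball x0 r) - ball x0 (5 * r / 6). u x \<ge> t"
    and "l < t"
  shows "\<forall>a \<ge> 0. contact_set a (cball y0 (r / 6)) (ball x0 r) u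
           \<subseteq> ball x0 (5 * r / 6) \<inter> {x. u x \<le> l + a * r\<^sup>2 / 36}"
proof (intro allI impI subsetI)
  fix a x
  assume a: "a \<ge> 0" and x: "x \<in> contact_set a (cball y0 (r / 6)) (ball x0 r) u"
  have y0: "y0 \<in> closure (ball x0 r)"
    using assms(1,3) closure_subset by fastforce
  have "u x \<le> l + a / 2 * (r / 6)\<^sup>2"
    using contact_set_le_radius[OF x a y0] assms(4) by simp
  moreover have "a / 2 * (r / 6)\<^sup>2 \<le> a * r\<^sup>2 / 36"
    using a by (simp add: power_divide)
  moreover have "x \<in> ball x0 (5 * r / 6)"
  proof (rule ccontr)
    assume out: "x \<notin> ball x0 (5 * r / 6)"
    have "x \<in> closure (ball x0 r)"
      using x unfolding contact_set_def by blast
    with out assms(5) have "u x \<ge> t" by blast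
    moreover have "u x \<le> l"
      using contact_set_le_if_closer_vertices[OF x a y0] assms(3,4) out
        dist_cball_le_outside_ball by blast
    ultimately show False using assms(6) by linarith
  qed
  ultimately show "x \<in> ball x0 (5 * r / 6) \<inter> {x. u x \<le> l + a * r\<^sup>2 / 36}"
    by auto
qed

end
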